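(* For any $F\in\mathscr{F}_{\mathrm{opt}}\cap\mathscr{F}_2$, there exists $i\in\mathcal{R}_F$ such that $|\mathcal{P}^2_{F,i}|=4$.
   Context: $\mathcal{S}$ is a finite source alphabet with $|\mathcal{S}|\ge 2$ and $\mathcal{C}=\{0,1\}$; $\mathcal{A}^k,\mathcal{A}^{\ast},\mathcal{A}^{+}$ are sequences of length $k$, finite, positive finite length; $\lambda$ empty sequence; $\preceq$ prefix, $\prec$ proper prefix; $\mathrm{suff}(x_1\cdots x_n)=x_2\cdots x_n$. A code-tuple $F$ with $m\ge1$ code tables consists of maps $f_i:\mathcal{S}\to\mathcal{C}^{\ast}$ and $\tau_i:\mathcal{S}\to\{0,\dots,m-1\}$, $i\in[F]=\{0,\dots,m-1\}$. $f_i^{\ast}(\lambda)=\lambda$, $\tau_i^{\ast}(\lambda)=i$, and for $\pmb{x}=x_1\cdots x_n\ne\lambda$, $f_i^{\ast}(\pmb{x})=f_i(x_1)f^{\ast}_{\tau_i(x_1)}(\mathrm{suff}(\pmb{x}))$, $\tau_i^{\ast}(\pmb{x})=\tau^{\ast}_{\tau_i(x_1)}(\mathrm{suff}(\pmb{x}))$. For integer $k\ge0$, $\pmb{b}\in\mathcal{C}^{\ast}$: $\mathcal{P}^k_{F,i}(\pmb{b})$ is the set of $\pmb{c}\in\mathcal{C}^k$ such that some $\pmb{x}=x_1\cdots x_n\in\mathcal{S}^{+}$ has $f_i^{\ast}(\pmb{x})\succeq\pmb{b}\pmb{c}$ and $f_i(x_1)\succeq\pmb{b}$; $\bar{\mathcal{P}}^k_{F,i}(\pmb{b})$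 the same with $f_i(x_1)\succ\pmb{b}$; $\mathcal{P}^k_{F,i}=\mathcal{P}^k_{F,i}(\lambda)$. $F\in\mathscr{F}_{2\text{-}\mathrm{dec}}$ if $\mathcal{P}^2_{F,\tau_i(s)}\cap\bar{\mathcal{P}}^2_{F,i}(f_i(s))=\emptyset$ for all $i,s$, and $\mathcal{P}^2_{F,\tau_i(s)}\cap\mathcal{P}^2_{F,\tau_i(s')}=\emptyset$ whenever $s\ne s'$, $f_i(s)=f_i(s')$. $F\in\mathscr{F}_{\mathrm{ext}}$ if $\mathcal{P}^1_{F,i}\ne\emptyset$ for all $i$. Fix $\mu:\mathcal{S}\to(0,1]$ with $\sum_s\mu(s)=1$; $Q(F)$ has entries $Q_{i,j}(F)=\sum_{s:\tau_i(s)=j}\mu(s)$; $F\in\mathscr{F}_{\mathrm{reg}}$ if $\pmb{\pi}Q(F)=\pmb{\pi}$, $\sum_i\pi_i=1$ has a unique solution $\pmb{\pi}(F)$; then $L(F)=\sum_i\pi_i(F)\sum_s|f_i(s)|\mu(s)$. $\mathscr{F}_0=\mathscr{F}_{\mathrm{reg}}\cap\mathscr{F}_{\mathrm{ext}}\cap\mathscr{F}_{2\text{-}\mathrm{dec}}$; $\mathscr{F}_{\mathrm{opt}}$ is the set of $F\in\mathscr{F}_0$ with $L(F)\le L(F')$ for all $F'\in\mathscr{F}_0$. $\mathscr{F}_2=\{F\in\mathscr{F}_{\mathrm{reg}}\cap\mathscr{F}_{2\text{-}\mathrm{dec}}:|\mathcal{P}^2_{F,i}|\ge3\ \forall i\in[F]\}$.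 $\mathcal{R}_F=\{i\in[F]:\text{for every }j\in[F]\text{ there is }\pmb{x}\in\mathcal{S}^{\ast}\text{ with }\tau^{\ast}_j(\pmb{x})=i\}$. *)

theory Defs
  imports Complex_Main "HOL-Library.Sublist"
begin

text \<open>A code-tuple with m = ntab F code tables f_i = ftab F i, tau_i = ttab F i
  (only indices i < m matter). Code alphabet C = {0,1} is modelled by bool.\<close>
record 's ctuple =
  ntab :: nat
  ftab :: "nat \<Rightarrow> 's \<Rightarrow> bool list"
  ttab :: "nat \<Rightarrow> 's \<Rightarrow> nat"

definition code_tuple :: "'s ctuple \<Rightarrow> bool" where
  "code_tuple F \<longleftrightarrow> ntab F \<ge> 1 \<and> (\<forall>i<ntab F. \<forall>s. ttab F i s < ntab F)"

fun fstar :: "'s ctuple \<Rightarrow> nat \<Rightarrow> 's list \<Rightarrow> bool list" where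
  "fstar F i [] = []"
| "fstar F i (x # xs) = ftab F i x @ fstar F (ttab F i x) xs"

fun tstar :: "'s ctuple \<Rightarrow> nat \<Rightarrow> 's list \<Rightarrow> nat" where
  "tstar F i [] = i"
| "tstar F i (x # xs) = tstar F (ttab F i x) xs"

definition Pset :: "'s ctuple \<Rightarrow> nat \<Rightarrow> nat \<Rightarrow> bool list \<Rightarrow> bool list set" where
  "Pset F k i b = {c. length c = k \<and> (\<exists>x. x \<noteq> [] \<and> prefix (b @ c) (fstar F i x)
       \<and> prefix b (ftab F i (hd x)))}"

definition Pbar :: "'s ctuple \<Rightarrow> nat \<Rightarrow> nat \<Rightarrow> bool list \<Rightarrow> bool list set" where
  "Pbar F k i b = {c. length c = k \<and> (\<exists>x. x \<noteq> [] \<and> prefix (b @ c) (fstar F i x)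
       \<and> strict_prefix b (ftab F i (hd x)))}"

definition two_dec :: "'s ctuple \<Rightarrow> bool" where
  "two_dec F \<longleftrightarrow> (\<forall>i<ntab F. \<forall>s.
      Pset F 2 (ttab F i s) [] \<inter> Pbar F 2 i (ftab F i s) = {}) \<and>
    (\<forall>i<ntab F. \<forall>s s'. s \<noteq> s' \<and> ftab F i s = ftab F i s' \<longrightarrow>
      Pset F 2 (ttab F i s) [] \<inter> Pset F 2 (ttab F i s') [] = {})"

definition ext_code :: "'s ctuple \<Rightarrow> bool" where
  "ext_code F \<longleftrightarrow> (\<forall>i<ntab F. Pset F 1 i [] \<noteq> {})"

definition Qmat :: "('s \<Rightarrow> real) \<Rightarrow> 's ctuple \<Rightarrow> nat \<Rightarrow> nat \<Rightarrow> real" where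
  "Qmat \<mu> F i j = (\<Sum>s\<in>{s. ttab F i s = j}. \<mu> s)"

definition stationary :: "('s \<Rightarrow> real) \<Rightarrow> 's ctuple \<Rightarrow> (nat \<Rightarrow> real) \<Rightarrow> bool" where
  "stationary \<mu> F p \<longleftrightarrow> (\<forall>j<ntab F. (\<Sum>i<ntab F. p i * Qmat \<mu> F i j) = p j)
     \<and> (\<Sum>i<ntab F. p i) = 1 \<and> (\<forall>i\<ge>ntab F. p i = 0)"

definition regular :: "('s \<Rightarrow> real) \<Rightarrow> 's ctuple \<Rightarrow> bool" where
  "regular \<mu> F \<longleftrightarrow> (\<exists>!p. stationary \<mu> F p)"

definition statdist :: "('s \<Rightarrow> real) \<Rightarrow> 's ctuple \<Rightarrow> nat \<Rightarrow> real" where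
  "statdist \<mu> F = (THE p. stationary \<mu> F p)"

definition avglen :: "('s::finite \<Rightarrow> real) \<Rightarrow> 's ctuple \<Rightarrow> real" where
  "avglen \<mu> F = (\<Sum>i<ntab F. statdist \<mu> F i * (\<Sum>s\<in>UNIV. real (length (ftab F i s)) * \<mu> s))"

definition F0 :: "('s \<Rightarrow> real) \<Rightarrow> 's ctuple set" where
  "F0 \<mu> = {F. code_tuple F \<and> regular \<mu> F \<and> ext_code F \<and> two_dec F}"

definition Fopt :: "('s::finite \<Rightarrow> real) \<Rightarrow> 's ctuple set" where
  "Fopt \<mu> = {F \<in> F0 \<mu>. \<forall>F' \<in> F0 \<mu>. avglen \<mu> F \<le> avglen \<mu> F'}"

definition F2 :: "('s \<Rightarrow> real) \<Rightarrow> 's ctuple set" where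
  "F2 \<mu> = {F. code_tuple F \<and> regular \<mu> F \<and> two_dec F \<and>
              (\<forall>i<ntab F. card (Pset F 2 i []) \<ge> 3)}"

definition Rset :: "'s ctuple \<Rightarrow> nat set" where
  "Rset F = {i. i < ntab F \<and> (\<forall>j<ntab F. \<exists>x. tstar F j x = i)}"

end

theory Submission
  imports Defs "Jordan_Normal_Form.Determinant"
begin

text \<open>
  Suppose every table reachable from all tables has exactly three 2-bit prefixes. Pick such a
  table j0 and a longest codeword f_j0(s0); then t = tau_j0(s0) is again of this kind and misses
  exactly one pattern ab. All codewords of table t are nonempty and those beginning with a
  continue with the complement of b, so deleting that second bit yields a table t' that still
  decodes. Adding t' as a new table and redirecting to it every transition into t taken along a
  codeword without proper extensions (such as f_j0(s0)) gives a code-tuple in F_0. Its stationary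
  distribution moves a positive mass phi from t to t', which shortens the average codeword length
  by phi times the probability of the symbols whose t-codeword begins with a, contradicting
  optimality.
\<close>

section \<open>Invariant vectors of stochastic matrices\<close>

definition stochastic :: "nat \<Rightarrow> (nat \<Rightarrow> nat \<Rightarrow> real) \<Rightarrow> bool" where
  "stochastic n P \<longleftrightarrow> (\<forall>i<n. \<forall>j<n. 0 \<le> P i j) \<and> (\<forall>i<n. (\<Sum>j<n. P i j) = 1)"

definition invariant_vec :: "nat \<Rightarrow> (nat \<Rightarrow> nat \<Rightarrow> real) \<Rightarrow> (nat \<Rightarrow> real) \<Rightarrow> bool" where
  "invariant_vec n P v \<longleftrightarrow> (\<forall>j<n. (\<Sum>i<n. v i * P i j) = v j)"

lemma invariant_vecD: "invariant_vec n P v \<Longrightarrow> j < n \<Longrightarrow> (\<Sum>i<n. v i * P i j) = v j"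
  unfolding invariant_vec_def by blast

lemma invariant_vec_add:
  "invariant_vec n P v \<Longrightarrow> invariant_vec n P w \<Longrightarrow> invariant_vec n P (\<lambda>i. v i + w i)"
  unfolding invariant_vec_def by (simp add: distrib_right sum.distrib)

lemma invariant_vec_scale:
  "invariant_vec n P v \<Longrightarrow> invariant_vec n P (\<lambda>i. c * v i)"
  unfolding invariant_vec_def by (simp add: mult.assoc flip: sum_distrib_left)

lemma stochastic_subinvariant_imp_invariant:
  assumes P: "stochastic n P" and sub: "\<And>j. j < n \<Longrightarrow> w j \<le> (\<Sum>i<n. w i * P i j)"
  shows "invariant_vec n P w"
proof -
  have "(\<Sum>j<n. \<Sum>i<n. w i * P i j) = (\<Sum>i<n. w i * (\<Sum>j<n. P i j))"
    by (subst sum.swap) (simp add: sum_distrib_left)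
  also have "\<dots> = (\<Sum>j<n. w j)"
    using P unfolding stochastic_def by simp
  finally have "(\<Sum>j<n. (\<Sum>i<n. w i * P i j) - w j) = 0"
    by (simp add: sum_subtractf)
  then have "\<forall>j\<in>{..<n}. (\<Sum>i<n. w i * P i j) - w j = 0"
    using sub by (subst (asm) sum_nonneg_eq_0_iff) auto
  then show ?thesis
    unfolding invariant_vec_def by simp
qed

lemma invariant_vec_abs:
  assumes P: "stochastic n P" and v: "invariant_vec n P v"
  shows "invariant_vec n P (\<lambda>i. \<bar>v i\<bar>)"
proof (rule stochastic_subinvariant_imp_invariant[OF P])
  fix j assume j: "j < n"
  have "\<bar>v j\<bar> = \<bar>\<Sum>i<n. v i * P i j\<bar>"
    using invariant_vecD[OF v j] by simp
  also have "\<dots> \<le> (\<Sum>i<n. \<bar>v i * P i j\<bar>)"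
    by (rule sum_abs)
  also have "\<dots> = (\<Sum>i<n. \<bar>v i\<bar> * P i j)"
    using P j unfolding stochastic_def by (intro sum.cong) (auto simp: abs_mult)
  finally show "\<bar>v j\<bar> \<le> (\<Sum>i<n. \<bar>v i\<bar> * P i j)" .
qed

lemma invariant_vec_pos_part:
  assumes "stochastic n P" "invariant_vec n P v"
  shows "invariant_vec n P (\<lambda>i. max (v i) 0)"
proof -
  have "invariant_vec n P (\<lambda>i. 1/2 * v i + 1/2 * \<bar>v i\<bar>)"
    using assms by (intro invariant_vec_add invariant_vec_scale invariant_vec_abs)
  moreover have "(\<lambda>i. 1/2 * v i + 1/2 * \<bar>v i\<bar>) = (\<lambda>i. max (v i) 0)"
    by (auto simp: fun_eq_iff max_def abs_if)
  ultimately show ?thesis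
    by simp
qed

lemma invariant_vec_zero_backward:
  assumes P: "stochastic n P" and v: "invariant_vec n P v" and nonneg: "\<forall>k<n. 0 \<le> v k"
    and i: "i < n" and j: "j < n" and Pij: "0 < P i j" and vj: "v j = 0"
  shows "v i = 0"
proof -
  have "v i * P i j \<le> (\<Sum>k<n. v k * P k j)"
    using P nonneg i j unfolding stochastic_def by (intro member_le_sum mult_nonneg_nonneg) auto
  then have "v i * P i j \<le> 0"
    using invariant_vecD[OF v j] vj by simp
  then have "v i \<le> 0"
    using Pij by (simp add: mult_le_0_iff)
  then show ?thesis
    using nonneg i by force
qed

lemma stochastic_det_minus_id:
  assumes P: "stochastic n P" and n: "n \<ge> 1"
  shows "det (mat n n (\<lambda>(i,j). P i j - (if i = j then 1 else 0)) :: real mat) = 0"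
proof -
  define B :: "real mat" where "B = mat n n (\<lambda>(i,j). P i j - (if i = j then 1 else 0))"
  define one :: "real vec" where "one = vec n (\<lambda>_. 1)"
  have B: "B \<in> carrier_mat n n"
    unfolding B_def by simp
  have "B *\<^sub>v one = 0\<^sub>v n"
  proof (rule eq_vecI)
    fix i assume "i < dim_vec (0\<^sub>v n :: real vec)"
    then have i: "i < n" by simp
    have "(B *\<^sub>v one) $ i = (\<Sum>j<n. P i j - (if i = j then 1 else 0))"
      using i unfolding B_def one_def
      by (simp add: mult_mat_vec_def scalar_prod_def row_def atLeast0LessThan)
    also have "\<dots> = (\<Sum>j<n. P i j) - (\<Sum>j<n. if i = j then 1 else 0)"
      by (rule sum_subtractf)
    finally show "(B *\<^sub>v one) $ i = 0\<^sub>v n $ i"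
      using P i unfolding stochastic_def by simp
  qed (simp add: B_def)
  moreover have "one \<in> carrier_vec n"
    unfolding one_def by simp
  moreover have "one $ 0 \<noteq> 0\<^sub>v n $ 0"
    using n unfolding one_def by simp
  then have "one \<noteq> 0\<^sub>v n"
    by metis
  ultimately show ?thesis
    unfolding det_0_iff_vec_prod_zero_field[OF B] B_def[symmetric] by blast
qed

lemma stochastic_nonzero_invariant_vec:
  assumes P: "stochastic n P" and n: "n \<ge> 1"
  obtains v where "invariant_vec n P v" "\<forall>i\<ge>n. v i = 0" "\<exists>i<n. v i \<noteq> 0"
proof -
  define B :: "real mat" where "B = mat n n (\<lambda>(i,j). P i j - (if i = j then 1 else 0))"
  have BT: "transpose_mat B \<in> carrier_mat n n"
    unfolding B_def by simp
  have "det (transpose_mat B) = 0"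
    using stochastic_det_minus_id[OF P n] det_transpose[of B n] unfolding B_def by simp
  then obtain u where u: "u \<in> carrier_vec n" "u \<noteq> 0\<^sub>v n" "transpose_mat B *\<^sub>v u = 0\<^sub>v n"
    unfolding det_0_iff_vec_prod_zero_field[OF BT] by blast
  define v where "v i = (if i < n then u $ i else 0)" for i
  have "invariant_vec n P v"
    unfolding invariant_vec_def
  proof (intro allI impI)
    fix j assume j: "j < n"
    have "0 = (transpose_mat B *\<^sub>v u) $ j"
      using u(3) j by simp
    also have "\<dots> = (\<Sum>i<n. (P i j - (if i = j then 1 else 0)) * u $ i)"
      using j u(1) unfolding B_def
      by (simp add: mult_mat_vec_def scalar_prod_def row_def atLeast0LessThan)
    also have "\<dots> = (\<Sum>i<n. P i j * u $ i - (if i = j then u $ i else 0))"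
      by (intro sum.cong) (auto simp: left_diff_distrib)
    also have "\<dots> = (\<Sum>i<n. v i * P i j) - v j"
      using j unfolding v_def by (simp add: sum_subtractf mult.commute)
    finally show "(\<Sum>i<n. v i * P i j) = v j"
      by simp
  qed
  moreover have "\<exists>i<n. v i \<noteq> 0"
  proof (rule ccontr)
    assume "\<not> (\<exists>i<n. v i \<noteq> 0)"
    then have "u = 0\<^sub>v n"
      using u(1) unfolding v_def by (intro eq_vecI) auto
    with u(2) show False ..
  qed
  ultimately show ?thesis
    using that unfolding v_def by auto
qed

lemma stochastic_invariant_distribution:
  assumes P: "stochastic n P" and n: "n \<ge> 1"
  obtains v where "invariant_vec n P v" "\<forall>i. 0 \<le> v i" "(\<Sum>i<n. v i) = 1" "\<forall>i\<ge>n. v i = 0"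
proof -
  obtain u where u: "invariant_vec n P u" "\<forall>i\<ge>n. u i = 0" "\<exists>i<n. u i \<noteq> 0"
    using stochastic_nonzero_invariant_vec[OF P n] by blast
  define S where "S = (\<Sum>i<n. \<bar>u i\<bar>)"
  obtain i0 where i0: "i0 < n" "u i0 \<noteq> 0"
    using u(3) by blast
  then have "0 < \<bar>u i0\<bar>"
    by simp
  also have "\<bar>u i0\<bar> \<le> S"
    unfolding S_def using i0 by (intro member_le_sum) auto
  finally have "S > 0" .
  define v where "v i = 1 / S * \<bar>u i\<bar>" for i
  have "invariant_vec n P v"
    unfolding v_def using P u(1) by (intro invariant_vec_scale invariant_vec_abs)
  moreover have "(\<Sum>i<n. v i) = 1"
    using \<open>S > 0\<close> unfolding v_def S_def by (simp flip: sum_divide_distrib)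
  ultimately show ?thesis
    using that \<open>S > 0\<close> u(2) unfolding v_def by auto
qed

section \<open>The Markov chain of a code-tuple\<close>

lemma tstar_append: "tstar F k (x @ y) = tstar F (tstar F k x) y"
  by (induction x arbitrary: k) auto

lemma ttab_less: "code_tuple F \<Longrightarrow> k < ntab F \<Longrightarrow> ttab F k s < ntab F"
  unfolding code_tuple_def by blast

lemma tstar_less: "code_tuple F \<Longrightarrow> k < ntab F \<Longrightarrow> tstar F k x < ntab F"
  by (induction x arbitrary: k) (auto simp: code_tuple_def)

lemma Qmat_eq_sum_if:
  fixes \<mu> :: "'a::finite \<Rightarrow> real"
  shows "Qmat \<mu> F i j = (\<Sum>s\<in>UNIV. if ttab F i s = j then \<mu> s else 0)"
  unfolding Qmat_def by (simp add: sum.inter_filter[symmetric])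

lemma Qmat_eq_0: "(\<And>s. ttab F i s \<noteq> j) \<Longrightarrow> Qmat \<mu> F i j = 0"
  unfolding Qmat_def by simp

lemma stationary_iff_invariant_vec:
  "stationary \<mu> F p \<longleftrightarrow>
     invariant_vec (ntab F) (Qmat \<mu> F) p \<and> (\<Sum>i<ntab F. p i) = 1 \<and> (\<forall>i\<ge>ntab F. p i = 0)"
  unfolding stationary_def invariant_vec_def by simp

definition closed_tables :: "'s ctuple \<Rightarrow> nat set \<Rightarrow> bool" where
  "closed_tables F C \<longleftrightarrow> C \<noteq> {} \<and> C \<subseteq> {..<ntab F} \<and> (\<forall>k\<in>C. \<forall>s. ttab F k s \<in> C)"

lemma closed_tables_reachable:
  assumes "code_tuple F" "j < ntab F"
  shows "closed_tables F (range (tstar F j))"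
  unfolding closed_tables_def
proof (intro conjI ballI allI)
  show "range (tstar F j) \<subseteq> {..<ntab F}"
    using tstar_less[OF assms] by auto
  fix k s assume "k \<in> range (tstar F j)"
  then obtain x where "k = tstar F j x" by auto
  then have "ttab F k s = tstar F j (x @ [s])" by (simp add: tstar_append)
  then show "ttab F k s \<in> range (tstar F j)" by simp
qed simp

lemma Rset_ttab: "code_tuple F \<Longrightarrow> i \<in> Rset F \<Longrightarrow> ttab F i s \<in> Rset F"
  unfolding Rset_def by (auto simp: ttab_less) (metis tstar_append tstar.simps)

locale symbol_distribution =
  fixes \<mu> :: "'a::finite \<Rightarrow> real"
  assumes mu_pos: "\<And>s. 0 < \<mu> s" and mu_sum: "(\<Sum>s\<in>UNIV. \<mu> s) = 1"
begin

lemma Qmat_nonneg: "0 \<le> Qmat \<mu> F i j"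
  unfolding Qmat_def using mu_pos by (intro sum_nonneg) (auto intro: less_imp_le)

lemma mu_le_Qmat: "\<mu> s \<le> Qmat \<mu> F i (ttab F i s)"
  unfolding Qmat_def using mu_pos by (intro member_le_sum) (auto intro: less_imp_le)

lemma stochastic_Qmat:
  assumes F: "code_tuple F"
  shows "stochastic (ntab F) (Qmat \<mu> F)"
  unfolding stochastic_def
proof (intro conjI allI impI Qmat_nonneg)
  fix i assume i: "i < ntab F"
  have "(\<Sum>j<ntab F. Qmat \<mu> F i j) = (\<Sum>s\<in>UNIV. \<Sum>j<ntab F. if ttab F i s = j then \<mu> s else 0)"
    unfolding Qmat_eq_sum_if by (rule sum.swap)
  also have "\<dots> = (\<Sum>s\<in>UNIV. \<mu> s)"
    using ttab_less[OF F i] by (simp add: sum.delta)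
  finally show "(\<Sum>j<ntab F. Qmat \<mu> F i j) = 1"
    using mu_sum by simp
qed

lemma invariant_vec_zero_along_path:
  assumes F: "code_tuple F" and v: "invariant_vec (ntab F) (Qmat \<mu> F) v"
    and nonneg: "\<forall>k<ntab F. 0 \<le> v k"
  shows "k < ntab F \<Longrightarrow> v (tstar F k x) = 0 \<Longrightarrow> v k = 0"
proof (induction x arbitrary: k)
  case (Cons s x)
  have "0 < Qmat \<mu> F k (ttab F k s)"
    using mu_pos[of s] mu_le_Qmat[of s F k] by linarith
  moreover have "v (ttab F k s) = 0"
    using Cons ttab_less[OF F] by simp
  ultimately show ?case
    using invariant_vec_zero_backward[OF stochastic_Qmat[OF F] v nonneg] Cons.prems(1)
      ttab_less[OF F] by blast
qed simp

lemma invariant_vec_zero_sum_vanishes: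
  assumes F: "code_tuple F" and reach: "\<And>k. k < ntab F \<Longrightarrow> \<exists>x. tstar F k x = r"
    and d: "invariant_vec (ntab F) (Qmat \<mu> F) d" and sum0: "(\<Sum>i<ntab F. d i) = 0"
    and dr: "0 \<le> d r"
  shows "\<forall>i<ntab F. d i = 0"
proof -
  let ?m = "\<lambda>i. max (- d i) 0"
  have m: "invariant_vec (ntab F) (Qmat \<mu> F) ?m"
    using invariant_vec_pos_part[OF stochastic_Qmat[OF F] invariant_vec_scale[OF d, of "-1"]]
    by simp
  have "?m k = 0" if k: "k < ntab F" for k
  proof -
    obtain x where "tstar F k x = r"
      using reach[OF k] by blast
    then have "?m (tstar F k x) = 0"
      using dr by simp
    then show ?thesis
      using invariant_vec_zero_along_path[OF F m _ k] by simp
  qed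
  then have "\<forall>i<ntab F. 0 \<le> d i"
    by (metis max.cobounded1 neg_le_0_iff_le)
  then show ?thesis
    using sum0 sum_nonneg_eq_0_iff[of "{..<ntab F}" d] by simp
qed

lemma stationary_unique_if_reachable:
  assumes F: "code_tuple F" and reach: "\<And>k. k < ntab F \<Longrightarrow> \<exists>x. tstar F k x = r"
    and p: "stationary \<mu> F p" and q: "stationary \<mu> F q"
  shows "p = q"
proof -
  define d where "d i = p i - q i" for i
  have d: "invariant_vec (ntab F) (Qmat \<mu> F) d" and sum0: "(\<Sum>i<ntab F. d i) = 0"
    using invariant_vec_add[OF _ invariant_vec_scale[of _ _ q "-1"]] p q
    unfolding stationary_iff_invariant_vec d_def by (auto simp: sum_subtractf)
  have "\<forall>i<ntab F. d i = 0"
  proof (cases "0 \<le> d r")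
    case True
    then show ?thesis
      using invariant_vec_zero_sum_vanishes[OF F reach d sum0] by blast
  next
    case False
    have "\<forall>i<ntab F. - d i = 0"
      using False sum0 invariant_vec_scale[OF d, of "-1"]
      by (intro invariant_vec_zero_sum_vanishes[OF F reach]) (auto simp: sum_negf)
    then show ?thesis by simp
  qed
  moreover have "d i = 0" if "i \<ge> ntab F" for i
    using p q that unfolding stationary_iff_invariant_vec d_def by simp
  ultimately show ?thesis
    unfolding d_def by (metis eq_iff_diff_eq_0 ext not_less)
qed

lemma closed_tables_stationary:
  assumes F: "code_tuple F" and C: "closed_tables F C"
  obtains p where "stationary \<mu> F p" "\<forall>i. i \<notin> C \<longrightarrow> p i = 0"
proof -
  let ?n = "ntab F" and ?Q = "Qmat \<mu> F"
  obtain c where c: "c \<in> C" "c < ?n"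
    using C unfolding closed_tables_def by blast
  \<comment> \<open>Outside C, let the chain jump to c; this does not change the rows indexed by C.\<close>
  define P where "P i j = (if i \<in> C then ?Q i j else if j = c then 1 else 0)" for i j
  have "stochastic ?n P"
    unfolding stochastic_def
  proof (intro conjI allI impI)
    fix i j
    show "0 \<le> P i j"
      unfolding P_def by (simp add: Qmat_nonneg)
  next
    fix i assume "i < ?n"
    then show "(\<Sum>j<?n. P i j) = 1"
      using stochastic_Qmat[OF F] c(2) unfolding stochastic_def P_def
      by (cases "i \<in> C") (simp_all add: sum.delta')
  qed
  moreover have "?n \<ge> 1"
    using F unfolding code_tuple_def by simp
  ultimately obtain v where v: "invariant_vec ?n P v" "(\<Sum>i<?n. v i) = 1" "\<forall>i\<ge>?n. v i = 0"
    using stochastic_invariant_distribution by metis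
  have P0: "P k i = 0" if "i \<notin> C" for k i
    using C c that unfolding P_def closed_tables_def by (auto intro: Qmat_eq_0)
  have out: "v i = 0" if "i \<notin> C" for i
  proof (cases "i < ?n")
    case True
    then show ?thesis
      using invariant_vecD[OF v(1) True] P0[OF that] by simp
  qed (use v(3) in simp)
  have "invariant_vec ?n ?Q v"
    unfolding invariant_vec_def
  proof (intro allI impI)
    fix j assume j: "j < ?n"
    have "(\<Sum>i<?n. v i * ?Q i j) = (\<Sum>i<?n. v i * P i j)"
      by (intro sum.cong) (auto simp: P_def out)
    then show "(\<Sum>i<?n. v i * ?Q i j) = v j"
      using invariant_vecD[OF v(1) j] by simp
  qed
  then show ?thesis
    using that out v(2,3) unfolding stationary_iff_invariant_vec by blast
qed

end

locale regular_code = symbol_distribution +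
  fixes F :: "'a::finite ctuple"
  assumes code_tuple_F: "code_tuple F" and regular_F: "regular \<mu> F"
begin

lemma stationary_statdist: "stationary \<mu> F (statdist \<mu> F)"
  using regular_F unfolding regular_def statdist_def by (rule theI')

lemma stationary_eq_statdist: "stationary \<mu> F p \<Longrightarrow> p = statdist \<mu> F"
  using regular_F stationary_statdist unfolding regular_def by blast

lemma statdist_nonneg: "0 \<le> statdist \<mu> F i"
proof -
  have "ntab F \<ge> 1"
    using code_tuple_F unfolding code_tuple_def by simp
  then obtain v where v: "invariant_vec (ntab F) (Qmat \<mu> F) v" "\<forall>i. 0 \<le> v i"
      "(\<Sum>i<ntab F. v i) = 1" "\<forall>i\<ge>ntab F. v i = 0"
    by (rule stochastic_invariant_distribution[OF stochastic_Qmat[OF code_tuple_F]])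
  then have "v = statdist \<mu> F"
    by (intro stationary_eq_statdist) (simp add: stationary_iff_invariant_vec)
  then show ?thesis
    using v(2) by blast
qed

lemma statdist_pos:
  assumes i: "i \<in> Rset F"
  shows "0 < statdist \<mu> F i"
proof (rule ccontr)
  let ?p = "statdist \<mu> F"
  have p: "invariant_vec (ntab F) (Qmat \<mu> F) ?p" "(\<Sum>k<ntab F. ?p k) = 1"
    using stationary_statdist unfolding stationary_iff_invariant_vec by simp_all
  assume "\<not> 0 < ?p i"
  then have "?p i = 0"
    using statdist_nonneg[of i] by simp
  have "?p k = 0" if k: "k < ntab F" for k
  proof -
    obtain x where "tstar F k x = i"
      using i k unfolding Rset_def by blast
    then show ?thesis
      using invariant_vec_zero_along_path[OF code_tuple_F p(1) _ k] \<open>?p i = 0\<close> statdist_nonneg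
      by metis
  qed
  then show False
    using p(2) by simp
qed

lemma closed_tables_meet:
  assumes C: "closed_tables F C" and D: "closed_tables F D"
  shows "C \<inter> D \<noteq> {}"
proof
  assume disj: "C \<inter> D = {}"
  obtain p q where p: "stationary \<mu> F p" "\<forall>i. i \<notin> C \<longrightarrow> p i = 0"
    and q: "stationary \<mu> F q" "\<forall>i. i \<notin> D \<longrightarrow> q i = 0"
    using closed_tables_stationary[OF code_tuple_F C] closed_tables_stationary[OF code_tuple_F D]
    by metis
  have "p = q"
    using stationary_eq_statdist[OF p(1)] stationary_eq_statdist[OF q(1)] by simp
  then have "p i = 0" for i
    using p(2) q(2) disj by blast
  then show False
    using p(1) unfolding stationary_iff_invariant_vec by simp
qed

text \<open>A closed set of tables of least cardinality lies in every closed set, in particular in the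
  set of tables reachable from any given table.\<close>

lemma Rset_nonempty: "Rset F \<noteq> {}"
proof -
  have "closed_tables F {..<ntab F}"
    using code_tuple_F unfolding closed_tables_def code_tuple_def by (auto simp: lessThan_empty_iff)
  then obtain C where C: "closed_tables F C" and least: "\<And>D. closed_tables F D \<Longrightarrow> card C \<le> card D"
    using ex_has_least_nat[of "closed_tables F" _ card] by metis
  then obtain c where c: "c \<in> C" "c < ntab F"
    unfolding closed_tables_def by blast
  have "c \<in> Rset F"
    unfolding Rset_def
  proof (intro CollectI conjI allI impI c(2))
    fix j assume "j < ntab F"
    let ?D = "range (tstar F j)"
    have D: "closed_tables F ?D"
      using closed_tables_reachable[OF code_tuple_F \<open>j < ntab F\<close>] .
    then have "closed_tables F (C \<inter> ?D)"
      using C closed_tables_meet[OF C D] unfolding closed_tables_def by auto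
    moreover have "finite C"
      using C unfolding closed_tables_def by (meson finite_lessThan finite_subset)
    ultimately have "C \<inter> ?D = C"
      using least by (intro card_seteq) auto
    then have "c \<in> range (tstar F j)"
      using c by blast
    then show "\<exists>x. tstar F j x = c"
      by auto
  qed
  then show ?thesis by blast
qed

end

section \<open>Two-bit prefix sets\<close>

lemma prefix_iff_take: "length c = n \<Longrightarrow> prefix c w \<longleftrightarrow> take n w = c"
proof
  assume "length c = n" "prefix c w"
  then show "take n w = c"
    by (auto simp: prefix_def)
next
  assume "length c = n" "take n w = c"
  then show "prefix c w"
    using take_is_prefix by metis
qed

lemma Pset_Nil_eq:
  "Pset F n k [] = {c. length c = n \<and> (\<exists>x. x \<noteq> [] \<and> take n (fstar F k x) = c)}"
  unfolding Pset_def using prefix_iff_take by auto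

lemma Pbar2_iff:
  "c \<in> Pbar F 2 k u \<longleftrightarrow> length c = 2 \<and>
     (\<exists>s y z. ftab F k s = u @ z \<and> z \<noteq> [] \<and> take 2 (z @ fstar F (ttab F k s) y) = c)"
proof
  assume "c \<in> Pbar F 2 k u"
  then obtain x where c: "length c = 2" "x \<noteq> []" "prefix (u @ c) (fstar F k x)"
      "strict_prefix u (ftab F k (hd x))"
    unfolding Pbar_def by auto
  obtain s y where x: "x = s # y"
    using c(2) by (cases x) auto
  obtain z where z: "ftab F k s = u @ z" "z \<noteq> []"
    using c(4) x by (auto simp: strict_prefix_def prefix_def)
  have "prefix c (z @ fstar F (ttab F k s) y)"
    using c(3) x z by simp
  then show "length c = 2 \<and>
      (\<exists>s y z. ftab F k s = u @ z \<and> z \<noteq> [] \<and> take 2 (z @ fstar F (ttab F k s) y) = c)"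
    using c(1) z prefix_iff_take by blast
next
  assume "length c = 2 \<and>
      (\<exists>s y z. ftab F k s = u @ z \<and> z \<noteq> [] \<and> take 2 (z @ fstar F (ttab F k s) y) = c)"
  then obtain s y z where c: "length c = 2" "ftab F k s = u @ z" "z \<noteq> []"
      "take 2 (z @ fstar F (ttab F k s) y) = c"
    by blast
  then have "prefix c (z @ fstar F (ttab F k s) y)"
    using prefix_iff_take by blast
  then have "prefix (u @ c) (fstar F k (s # y))"
    using c(2) by simp
  moreover have "strict_prefix u (ftab F k (hd (s # y)))"
    using c(2,3) by (simp add: strict_prefix_def)
  ultimately show "c \<in> Pbar F 2 k u"
    unfolding Pbar_def using c(1) by blast
qed

lemma lists_length_2:
  "{c::bool list. length c = 2} = {[False,False], [False,True], [True,False], [True,True]}"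
  by (auto simp: numeral_2_eq_2 length_Suc_conv)

lemma finite_lists_length_2: "finite {c::bool list. length c = 2}"
  by (simp add: lists_length_2)

lemma card_lists_length_2: "card {c::bool list. length c = 2} = 4"
  by (simp add: lists_length_2)

lemma Pset2_subset: "Pset F 2 k u \<subseteq> {c. length c = 2}"
  unfolding Pset_def by auto

lemma card_Pset2_le_4: "card (Pset F 2 k u) \<le> 4"
  using card_mono[OF finite_lists_length_2 Pset2_subset] card_lists_length_2 by simp

lemma Pset2_missing:
  assumes "card (Pset F 2 k u) < 4"
  obtains a b where "[a, b] \<notin> Pset F 2 k u"
proof -
  have "Pset F 2 k u \<noteq> {c. length c = 2}"
    using assms card_lists_length_2 by auto
  then obtain c where "length c = 2" "c \<notin> Pset F 2 k u"
    using Pset2_subset by blast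
  then show ?thesis
    using that by (auto simp: numeral_2_eq_2 length_Suc_conv)
qed

lemma card_disjoint_lists_length_2:
  assumes "A \<subseteq> {c::bool list. length c = 2}" "B \<subseteq> {c. length c = 2}" "A \<inter> B = {}"
  shows "card A + card B \<le> 4"
proof -
  have "finite A" "finite B"
    using assms(1,2) by (auto intro: finite_subset[OF _ finite_lists_length_2])
  then have "card A + card B = card (A \<union> B)"
    using card_Un_disjoint[OF _ _ assms(3)] by simp
  also have "\<dots> \<le> 4"
    using card_mono[OF finite_lists_length_2, of "A \<union> B"] assms card_lists_length_2 by simp
  finally show ?thesis .
qed

lemma take1_append: "take 1 (u @ r) = (if u = [] then take 1 r else take 1 u)"
  by (cases u) auto

lemma take2_append_cong: "z \<noteq> [] \<Longrightarrow> take 1 r = take 1 r' \<Longrightarrow> take 2 (z @ r) = take 2 (z @ r')"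
  by (cases z; cases "tl z") (simp_all add: numeral_2_eq_2)

section \<open>Code-tuples with at least three 2-bit prefixes per table\<close>

locale F2_code = regular_code \<mu> F for \<mu> :: "'a::finite \<Rightarrow> real" and F :: "'a ctuple" +
  assumes two_symbols: "card (UNIV :: 'a set) \<ge> 2"
    and ext_code_F: "ext_code F" and two_dec_F: "two_dec F"
    and card_Pset2_ge_3: "\<And>k. k < ntab F \<Longrightarrow> 3 \<le> card (Pset F 2 k [])"
begin

lemma ttab_F_less: "k < ntab F \<Longrightarrow> ttab F k s < ntab F"
  using ttab_less[OF code_tuple_F] .

lemma exists_other_symbol: "\<exists>s'::'a. s' \<noteq> s"
proof (rule ccontr)
  assume "\<not> ?thesis"
  then have "(UNIV :: 'a set) = {s}"
    by auto
  then have "card (UNIV :: 'a set) = card {s}"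
    by (simp only:)
  then show False
    using two_symbols by simp
qed

lemma first_bit_occurs:
  assumes k: "k < ntab F"
  shows "\<exists>x. x \<noteq> [] \<and> take 1 (fstar F k x) = [\<beta>]"
proof (rule ccontr)
  assume none: "\<not> ?thesis"
  have "Pset F 2 k [] \<subseteq> {[\<not>\<beta>, False], [\<not>\<beta>, True]}"
  proof
    fix c assume "c \<in> Pset F 2 k []"
    then obtain x where x: "length c = 2" "x \<noteq> []" "take 2 (fstar F k x) = c"
      unfolding Pset_Nil_eq by auto
    obtain p q where c: "c = [p, q]"
      using x(1) by (auto simp: numeral_2_eq_2 length_Suc_conv)
    have "take 1 (fstar F k x) = take 1 (take 2 (fstar F k x))"
      by simp
    then have "take 1 (fstar F k x) = [p]"
      using x(3) c by simp
    then show "c \<in> {[\<not>\<beta>, False], [\<not>\<beta>, True]}"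
      using none x(2) c by (cases q) auto
  qed
  then have "card (Pset F 2 k []) \<le> card {[\<not>\<beta>, False], [\<not>\<beta>, True]}"
    by (intro card_mono) auto
  also have "\<dots> \<le> 2"
    by (simp add: card_insert_if)
  finally have "card (Pset F 2 k []) \<le> 2" .
  then show False
    using card_Pset2_ge_3[OF k] by simp
qed

lemma ftab_inj:
  assumes k: "k < ntab F" and "s \<noteq> s'"
  shows "ftab F k s \<noteq> ftab F k s'"
proof
  assume "ftab F k s = ftab F k s'"
  then have "Pset F 2 (ttab F k s) [] \<inter> Pset F 2 (ttab F k s') [] = {}"
    using two_dec_F k \<open>s \<noteq> s'\<close> unfolding two_dec_def by blast
  then have "card (Pset F 2 (ttab F k s) []) + card (Pset F 2 (ttab F k s') []) \<le> 4"
    by (intro card_disjoint_lists_length_2 Pset2_subset)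
  then show False
    using card_Pset2_ge_3[OF ttab_F_less[OF k, of s]] card_Pset2_ge_3[OF ttab_F_less[OF k, of s']]
    by simp
qed

lemma Pbar2_Nil_nonempty:
  assumes k: "k < ntab F"
  shows "Pbar F 2 k [] \<noteq> {}"
proof -
  obtain s1 s2 :: 'a where "s1 \<noteq> s2"
    using exists_other_symbol by blast
  then obtain s where ne: "ftab F k s \<noteq> []"
    using ftab_inj[OF k] by metis
  obtain y where y: "take 1 (fstar F (ttab F k s) y) = [True]"
    using first_bit_occurs[OF ttab_F_less[OF k]] by blast
  let ?c = "take 2 (ftab F k s @ fstar F (ttab F k s) y)"
  have "length ?c = 2"
    using ne y by (cases "ftab F k s"; cases "fstar F (ttab F k s) y") auto
  then have "?c \<in> Pbar F 2 k []"
    unfolding Pbar2_iff using ne by auto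
  then show ?thesis
    by blast
qed

lemma longest_codeword:
  assumes j: "j < ntab F"
  obtains s where "ftab F j s \<noteq> []" "Pbar F 2 j (ftab F j s) = {}"
proof -
  let ?M = "Max (range (\<lambda>s. length (ftab F j s)))"
  have "?M \<in> range (\<lambda>s. length (ftab F j s))"
    by (intro Max_in) auto
  then obtain s :: 'a where "length (ftab F j s) = ?M"
    by (metis imageE)
  then have s: "\<And>s'. length (ftab F j s') \<le> length (ftab F j s)"
    by simp
  obtain s' :: 'a where "s' \<noteq> s"
    using exists_other_symbol by blast
  then have "ftab F j s \<noteq> []"
    using ftab_inj[OF j] s[of s'] by fastforce
  moreover have "Pbar F 2 j (ftab F j s) = {}"
    using s prefix_length_less unfolding Pbar_def by (fastforce simp: not_less[symmetric])
  ultimately show ?thesis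
    using that by blast
qed

end

section \<open>Contracting a table that misses a 2-bit prefix\<close>

locale contraction = F2_code \<mu> F for \<mu> :: "'a::finite \<Rightarrow> real" and F :: "'a ctuple" +
  fixes j0 :: nat and s0 :: 'a and t :: nat and a b :: bool
  assumes j0_Rset: "j0 \<in> Rset F" and s0_nonempty: "ftab F j0 s0 \<noteq> []"
    and s0_maximal: "Pbar F 2 j0 (ftab F j0 s0) = {}"
    and t_eq: "t = ttab F j0 s0" and card_Pset_t: "card (Pset F 2 t []) = 3"
    and ab_missing: "[a, b] \<notin> Pset F 2 t []"
begin

lemma j0_less: "j0 < ntab F"
  using j0_Rset unfolding Rset_def by simp

lemma t_Rset: "t \<in> Rset F"
  unfolding t_eq using Rset_ttab[OF code_tuple_F j0_Rset] .

lemma t_less: "t < ntab F"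
  using t_Rset unfolding Rset_def by simp

lemma Pset_t_eq: "Pset F 2 t [] = {c. length c = 2} - {[a, b]}"
proof (rule card_seteq)
  show "finite ({c::bool list. length c = 2} - {[a, b]})"
    using finite_lists_length_2 by simp
  show "Pset F 2 t [] \<subseteq> {c. length c = 2} - {[a, b]}"
    using Pset2_subset ab_missing by blast
  show "card ({c::bool list. length c = 2} - {[a, b]}) \<le> card (Pset F 2 t [])"
    using card_Pset_t card_lists_length_2 by (simp add: card_Diff_singleton)
qed

text \<open>If f_t(s) were empty, the prefixes of table tau_t(s) (at least three) and the nonempty set
  Pbar F 2 t [] would be disjoint subsets of Pset F 2 t [], which has only three elements.\<close>

lemma codeword_t_nonempty: "ftab F t s \<noteq> []"
proof
  assume e: "ftab F t s = []"
  let ?j = "ttab F t s"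
  have sub1: "Pset F 2 ?j [] \<subseteq> Pset F 2 t []"
  proof
    fix c assume "c \<in> Pset F 2 ?j []"
    then obtain x where x: "length c = 2" "x \<noteq> []" "take 2 (fstar F ?j x) = c"
      unfolding Pset_Nil_eq by auto
    have "fstar F t (s # x) = fstar F ?j x"
      using e by simp
    then show "c \<in> Pset F 2 t []"
      unfolding Pset_Nil_eq using x by (intro CollectI conjI exI[of _ "s # x"]) auto
  qed
  have sub2: "Pbar F 2 t [] \<subseteq> Pset F 2 t []"
    unfolding Pset_def Pbar_def by auto
  have disj: "Pset F 2 ?j [] \<inter> Pbar F 2 t [] = {}"
    using two_dec_F t_less e unfolding two_dec_def by metis
  have fin: "finite (Pset F 2 t [])"
    using finite_subset[OF Pset2_subset finite_lists_length_2] .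
  then have "card (Pset F 2 ?j []) + card (Pbar F 2 t []) = card (Pset F 2 ?j [] \<union> Pbar F 2 t [])"
    using card_Un_disjoint[OF _ _ disj] finite_subset[OF sub1] finite_subset[OF sub2] by simp
  also have "\<dots> \<le> 3"
    using card_mono[OF fin, of "Pset F 2 ?j [] \<union> Pbar F 2 t []"] sub1 sub2 card_Pset_t by simp
  finally have "card (Pset F 2 ?j []) + card (Pbar F 2 t []) \<le> 3" .
  moreover have "0 < card (Pbar F 2 t [])"
    using Pbar2_Nil_nonempty[OF t_less] finite_subset[OF sub2 fin] by (simp add: card_gt_0_iff)
  ultimately show False
    using card_Pset2_ge_3[OF ttab_F_less[OF t_less, of s]] by simp
qed

lemma codeword_t_hd_a:
  assumes "hd (ftab F t s) = a"
  obtains w where "ftab F t s = a # (\<not> b) # w"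
proof -
  obtain u where u: "ftab F t s = a # u"
    using codeword_t_nonempty[of s] assms by (cases "ftab F t s") auto
  show ?thesis
  proof (cases u)
    case Nil
    obtain y where "take 1 (fstar F (ttab F t s) y) = [b]"
      using first_bit_occurs[OF ttab_F_less[OF t_less]] by blast
    then have "take 2 (fstar F t (s # y)) = [a, b]"
      using u Nil by (cases "fstar F (ttab F t s) y") (auto simp: numeral_2_eq_2)
    then have "[a, b] \<in> Pset F 2 t []"
      unfolding Pset_Nil_eq by (intro CollectI conjI exI[of _ "s # y"]) auto
    then show ?thesis
      using ab_missing by contradiction
  next
    case (Cons c w)
    show ?thesis
    proof (cases "c = b")
      case True
      then have "take 2 (fstar F t [s]) = [a, b]"
        using u Cons by (simp add: numeral_2_eq_2)
      then have "[a, b] \<in> Pset F 2 t []"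
        unfolding Pset_Nil_eq by (intro CollectI conjI exI[of _ "[s]"]) auto
      then show ?thesis
        using ab_missing by contradiction
    next
      case False
      then have "c = (\<not> b)"
        by blast
      then show ?thesis
        using that u Cons by blast
    qed
  qed
qed

lemma exists_codeword_t_hd_a: "\<exists>s. hd (ftab F t s) = a"
proof -
  have "[a, \<not> b] \<in> Pset F 2 t []"
    unfolding Pset_t_eq by auto
  then obtain x where x: "x \<noteq> []" "take 2 (fstar F t x) = [a, \<not> b]"
    unfolding Pset_Nil_eq by auto
  then obtain s y where x_eq: "x = s # y"
    by (cases x) auto
  obtain p u where f: "ftab F t s = p # u"
    using codeword_t_nonempty[of s] by (cases "ftab F t s") auto
  then have "take 2 (fstar F t x) = p # take 1 (u @ fstar F (ttab F t s) y)"
    using x_eq by (simp add: numeral_2_eq_2)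
  then have "p = a"
    using x(2) by simp
  then show ?thesis
    using f by (intro exI[of _ s]) simp
qed

text \<open>Only codewords without proper extensions are redirected: for them the first condition of
  two_dec holds whatever the prefixes of the new table are.\<close>

definition redirected :: "nat \<Rightarrow> 'a \<Rightarrow> bool" where
  "redirected k s \<longleftrightarrow>
     k < ntab F \<and> ttab F k s = t \<and> ftab F k s \<noteq> [] \<and> Pbar F 2 k (ftab F k s) = {}"

definition contract :: "bool list \<Rightarrow> bool list" where
  "contract w = (if w \<noteq> [] \<and> hd w = a then a # drop 2 w else w)"

definition origin :: "nat \<Rightarrow> nat" where
  "origin k = (if k = ntab F then t else k)"

definition G :: "'a ctuple" where
  "G = F\<lparr>ntab := Suc (ntab F),
          ftab := (\<lambda>k s. if k = ntab F then contract (ftab F t s) else ftab F k s),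
          ttab := (\<lambda>k s. if redirected (origin k) s then ntab F else ttab F (origin k) s)\<rparr>"

lemma G_simps:
  "ntab G = Suc (ntab F)"
  "ftab G k s = (if k = ntab F then contract (ftab F t s) else ftab F k s)"
  "ttab G k s = (if redirected (origin k) s then ntab F else ttab F (origin k) s)"
  unfolding G_def by simp_all

lemma origin_less: "k \<le> ntab F \<Longrightarrow> origin k < ntab F"
  unfolding origin_def using t_less by auto

lemma origin_eq: "k < ntab F \<Longrightarrow> origin k = k"
  unfolding origin_def by simp

lemma ttab_G_le: "k \<le> ntab F \<Longrightarrow> ttab G k s \<le> ntab F"
  using ttab_F_less[OF origin_less] unfolding G_simps by (auto simp: less_imp_le)

lemma origin_ttab_G: "k \<le> ntab F \<Longrightarrow> origin (ttab G k s) = ttab F (origin k) s"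
  using ttab_F_less[OF origin_less, of k s]
  unfolding G_simps origin_def redirected_def by auto

lemma origin_tstar_G:
  "k \<le> ntab F \<Longrightarrow> tstar G k x \<le> ntab F \<and> origin (tstar G k x) = tstar F (origin k) x"
proof (induction x arbitrary: k)
  case (Cons s y)
  then show ?case
    using Cons.IH[OF ttab_G_le] origin_ttab_G by simp
qed simp

lemma code_tuple_G: "code_tuple G"
  unfolding code_tuple_def G_simps(1) using ttab_G_le by (simp add: less_Suc_eq_le)

definition admissible :: "bool list \<Rightarrow> bool" where
  "admissible w \<longleftrightarrow> w \<noteq> [] \<and> (hd w = a \<longrightarrow> (\<exists>w'. w = a # (\<not> b) # w'))"

lemma admissible_codeword_t: "admissible (ftab F t s)"
proof -
  have "\<exists>w. ftab F t s = a # (\<not> b) # w" if "hd (ftab F t s) = a"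
    using codeword_t_hd_a[OF that] by blast
  then show ?thesis
    unfolding admissible_def using codeword_t_nonempty by blast
qed

lemma contract_a_Cons: "contract (a # c # w) = a # w"
  unfolding contract_def by simp

lemma contract_not_a: "w \<noteq> [] \<Longrightarrow> hd w \<noteq> a \<Longrightarrow> contract w = w"
  unfolding contract_def by simp

lemma contract_eq_Nil_iff: "contract w = [] \<longleftrightarrow> w = []"
  unfolding contract_def by auto

lemma take1_contract: "take 1 (contract w) = take 1 w"
  unfolding contract_def by (cases w) auto

lemma contract_append_iff:
  assumes u: "admissible u" and v: "admissible v"
  shows "contract v = contract u @ z \<longleftrightarrow> v = u @ z"
proof (cases "hd u = a")
  case True
  then obtain u' where u': "u = a # (\<not> b) # u'"
    using u unfolding admissible_def by blast
  show ?thesis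
  proof (cases "hd v = a")
    case True
    then obtain v' where "v = a # (\<not> b) # v'"
      using v unfolding admissible_def by blast
    then show ?thesis
      unfolding u' by (simp add: contract_a_Cons)
  next
    case False
    then have "contract v = v"
      using v contract_not_a unfolding admissible_def by blast
    moreover have "hd (contract u @ z) = a"
      unfolding u' contract_a_Cons by simp
    ultimately show ?thesis
      using False u' by auto
  qed
next
  case False
  then have cu: "contract u = u"
    using u contract_not_a unfolding admissible_def by blast
  show ?thesis
  proof (cases "hd v = a")
    case True
    then obtain v' where v': "v = a # (\<not> b) # v'"
      using v unfolding admissible_def by blast
    have "hd (u @ z) \<noteq> a"
      using False u unfolding admissible_def by simp
    moreover have "hd (contract v) = a"
      unfolding v' contract_a_Cons by simp
    ultimately show ?thesis
      using cu True by metis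
  next
    case False
    then have "contract v = v"
      using v contract_not_a unfolding admissible_def by blast
    then show ?thesis
      using cu by simp
  qed
qed

lemma contract_inj: "admissible u \<Longrightarrow> admissible v \<Longrightarrow> contract v = contract u \<Longrightarrow> v = u"
  using contract_append_iff[of u v "[]"] by simp

lemma take1_fstar_G:
  "k \<le> ntab F \<Longrightarrow> take 1 (fstar G k x) = take 1 (fstar F (origin k) x)"
proof (induction x arbitrary: k)
  case (Cons s y)
  have "ftab G k s = [] \<longleftrightarrow> ftab F (origin k) s = []"
    "take 1 (ftab G k s) = take 1 (ftab F (origin k) s)"
    using take1_contract[of "ftab F t s"] unfolding G_simps origin_def
    by (auto simp: contract_eq_Nil_iff)
  moreover have "take 1 (fstar G (ttab G k s) y) = take 1 (fstar F (ttab F (origin k) s) y)"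
    using Cons.IH[OF ttab_G_le[OF Cons.prems]] origin_ttab_G[OF Cons.prems] by simp
  ultimately show ?case
    unfolding fstar.simps take1_append by simp
qed simp

text \<open>In an old table the 2-bit prefixes are unchanged: a redirected codeword is nonempty, so only
  the first bit after it matters, and first bits are the same in the new table as in table t.\<close>

lemma take2_fstar_G: "k < ntab F \<Longrightarrow> take 2 (fstar G k x) = take 2 (fstar F k x)"
proof (induction x arbitrary: k)
  case (Cons s y)
  have f: "ftab G k s = ftab F k s" and o: "origin k = k"
    using Cons.prems origin_eq unfolding G_simps by simp_all
  show ?case
  proof (cases "ftab F k s = []")
    case True
    then have "ttab G k s = ttab F k s"
      using o unfolding G_simps redirected_def by simp
    then show ?thesis
      using Cons.IH[OF ttab_F_less[OF Cons.prems]] f True by simp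
  next
    case False
    have "take 1 (fstar G (ttab G k s) y) = take 1 (fstar F (ttab F k s) y)"
      using take1_fstar_G[OF ttab_G_le, of k s y] origin_ttab_G[of k s] o Cons.prems by simp
    then show ?thesis
      using f False take2_append_cong by simp
  qed
qed simp

lemma Pset2_G: "k < ntab F \<Longrightarrow> Pset G 2 k [] = Pset F 2 k []"
  unfolding Pset_Nil_eq using take2_fstar_G by simp

lemma Pset1_G: "k \<le> ntab F \<Longrightarrow> Pset G 1 k [] = Pset F 1 (origin k) []"
  unfolding Pset_Nil_eq using take1_fstar_G by simp

lemma Pbar2_ftab_G:
  assumes k: "k \<le> ntab F"
  shows "Pbar G 2 k (ftab G k s) = Pbar F 2 (origin k) (ftab F (origin k) s)"
proof (rule Set.set_eqI)
  fix c
  have ext: "ftab G k s' = ftab G k s @ z \<longleftrightarrow> ftab F (origin k) s' = ftab F (origin k) s @ z"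
    for s' z
  proof (cases "k = ntab F")
    case True
    then show ?thesis
      using contract_append_iff[OF admissible_codeword_t admissible_codeword_t]
      unfolding G_simps origin_def by simp
  qed (simp add: G_simps origin_def)
  have next_bits:
    "take 2 (z @ fstar G (ttab G k s') y) = take 2 (z @ fstar F (ttab F (origin k) s') y)"
    if "z \<noteq> []" for z s' y
  proof (rule take2_append_cong[OF that])
    show "take 1 (fstar G (ttab G k s') y) = take 1 (fstar F (ttab F (origin k) s') y)"
      using take1_fstar_G[OF ttab_G_le[OF k], of s' y] origin_ttab_G[OF k, of s'] by simp
  qed
  show "c \<in> Pbar G 2 k (ftab G k s) \<longleftrightarrow> c \<in> Pbar F 2 (origin k) (ftab F (origin k) s)"
    unfolding Pbar2_iff ext by (simp only: next_bits not_False_eq_True cong: conj_cong)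
qed

lemma ftab_G_inj:
  assumes k: "k \<le> ntab F" and "s \<noteq> s'"
  shows "ftab G k s \<noteq> ftab G k s'"
proof (cases "k = ntab F")
  case True
  then show ?thesis
    using ftab_inj[OF t_less \<open>s \<noteq> s'\<close>] contract_inj[OF admissible_codeword_t admissible_codeword_t]
    unfolding G_simps by metis
next
  case False
  then show ?thesis
    using ftab_inj[of k s s'] k \<open>s \<noteq> s'\<close> unfolding G_simps by simp
qed

lemma two_dec_G: "two_dec G"
  unfolding two_dec_def
proof (intro conjI allI impI)
  fix i s assume "i < ntab G"
  then have i: "i \<le> ntab F"
    unfolding G_simps by simp
  show "Pset G 2 (ttab G i s) [] \<inter> Pbar G 2 i (ftab G i s) = {}"
  proof (cases "redirected (origin i) s")
    case True
    then show ?thesis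
      unfolding Pbar2_ftab_G[OF i] redirected_def by simp
  next
    case False
    then have "ttab G i s = ttab F (origin i) s"
      unfolding G_simps by simp
    then show ?thesis
      using two_dec_F origin_less[OF i] Pset2_G ttab_F_less[OF origin_less[OF i]]
      unfolding two_dec_def Pbar2_ftab_G[OF i] by simp
  qed
next
  fix i s s' assume "i < ntab G" "s \<noteq> s' \<and> ftab G i s = ftab G i s'"
  then show "Pset G 2 (ttab G i s) [] \<inter> Pset G 2 (ttab G i s') [] = {}"
    using ftab_G_inj[of i s s'] unfolding G_simps by (simp add: less_Suc_eq_le)
qed

lemma ext_code_G: "ext_code G"
  unfolding ext_code_def
proof (intro allI impI)
  fix i assume "i < ntab G"
  then have i: "i \<le> ntab F"
    unfolding G_simps by simp
  show "Pset G 1 i [] \<noteq> {}"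
    using Pset1_G[OF i] ext_code_F origin_less[OF i] unfolding ext_code_def by simp
qed

definition redirect_mass :: "nat \<Rightarrow> real" where
  "redirect_mass i = (\<Sum>s\<in>UNIV. if redirected i s then \<mu> s else 0)"

definition phi :: real where
  "phi = (\<Sum>i<ntab F. statdist \<mu> F i * redirect_mass i)"

text \<open>The mass phi entering t along redirected transitions moves to the new table, whose
  transitions are those of t.\<close>

definition pi_G :: "nat \<Rightarrow> real" where
  "pi_G k = statdist \<mu> F k - (if k = t then phi else 0) + (if k = ntab F then phi else 0)"

lemma redirect_mass_nonneg: "0 \<le> redirect_mass i"
  unfolding redirect_mass_def using mu_pos by (intro sum_nonneg) (auto intro: less_imp_le)

lemma Qmat_G:
  assumes i: "i < ntab F"
  shows "Qmat \<mu> G i j =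
    Qmat \<mu> F i j - (if j = t then redirect_mass i else 0)
      + (if j = ntab F then redirect_mass i else 0)"
proof -
  have "(if ttab G i s = j then \<mu> s else 0) = (if ttab F i s = j then \<mu> s else 0)
     - (if j = t then (if redirected i s then \<mu> s else 0) else 0)
     + (if j = ntab F then (if redirected i s then \<mu> s else 0) else 0)" for s
    using i t_less origin_eq[OF i] unfolding G_simps redirected_def by auto
  then show ?thesis
    unfolding Qmat_eq_sum_if redirect_mass_def using t_less
    by (cases "j = t"; cases "j = ntab F") (simp_all add: sum.distrib sum_subtractf)
qed

lemma Qmat_G_new: "Qmat \<mu> G (ntab F) j = Qmat \<mu> G t j"
  unfolding Qmat_def G_simps origin_def using t_less by simp

lemma statdist_F_invariant:
  assumes "j \<le> ntab F"
  shows "(\<Sum>i<ntab F. statdist \<mu> F i * Qmat \<mu> F i j) = statdist \<mu> F j"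
proof (cases "j < ntab F")
  case True
  then show ?thesis
    using stationary_statdist unfolding stationary_iff_invariant_vec invariant_vec_def by simp
next
  case False
  then have "j = ntab F"
    using assms by simp
  moreover have "Qmat \<mu> F i (ntab F) = 0" if "i < ntab F" for i
    using ttab_F_less[OF that] by (intro Qmat_eq_0) (metis less_irrefl)
  ultimately show ?thesis
    using stationary_statdist unfolding stationary_iff_invariant_vec by simp
qed

lemma sum_statdist_shift:
  "(\<Sum>i<ntab F. (statdist \<mu> F i - (if i = t then phi else 0)) * X i) =
   (\<Sum>i<ntab F. statdist \<mu> F i * X i) - phi * X t"
proof -
  have "(\<Sum>i<ntab F. (statdist \<mu> F i - (if i = t then phi else 0)) * X i) =
        (\<Sum>i<ntab F. statdist \<mu> F i * X i - (if i = t then phi * X i else 0))"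
    by (intro sum.cong) (auto simp: left_diff_distrib)
  also have "\<dots> = (\<Sum>i<ntab F. statdist \<mu> F i * X i) - (\<Sum>i<ntab F. (if i = t then phi * X i else 0))"
    by (rule sum_subtractf)
  also have "(\<Sum>i<ntab F. (if i = t then phi * X i else 0)) = phi * X t"
    using t_less by (simp add: sum.delta)
  finally show ?thesis .
qed

lemma pi_G_less: "i < ntab F \<Longrightarrow> pi_G i = statdist \<mu> F i - (if i = t then phi else 0)"
  unfolding pi_G_def by simp

lemma pi_G_new: "pi_G (ntab F) = phi"
  unfolding pi_G_def using t_less stationary_statdist unfolding stationary_iff_invariant_vec by simp

lemma stationary_pi_G: "stationary \<mu> G pi_G"
  unfolding stationary_iff_invariant_vec G_simps(1) invariant_vec_def
proof (intro conjI allI impI)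
  fix j assume "j < Suc (ntab F)"
  then have j: "j \<le> ntab F" by simp
  have "(\<Sum>i<ntab F. statdist \<mu> F i * Qmat \<mu> G i j) =
      (\<Sum>i<ntab F. statdist \<mu> F i * Qmat \<mu> F i j
         - (if j = t then statdist \<mu> F i * redirect_mass i else 0)
         + (if j = ntab F then statdist \<mu> F i * redirect_mass i else 0))"
    by (intro sum.cong) (auto simp: Qmat_G ring_distribs)
  also have "\<dots> = statdist \<mu> F j - (if j = t then phi else 0) + (if j = ntab F then phi else 0)"
    unfolding phi_def statdist_F_invariant[OF j, symmetric] using t_less
    by (cases "j = t"; cases "j = ntab F") (simp_all add: sum.distrib sum_subtractf)
  finally have old: "(\<Sum>i<ntab F. statdist \<mu> F i * Qmat \<mu> G i j) = pi_G j"
    unfolding pi_G_def .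
  have "(\<Sum>i<Suc (ntab F). pi_G i * Qmat \<mu> G i j) =
      (\<Sum>i<ntab F. (statdist \<mu> F i - (if i = t then phi else 0)) * Qmat \<mu> G i j)
        + phi * Qmat \<mu> G t j"
    using pi_G_less pi_G_new Qmat_G_new by simp
  also have "\<dots> = pi_G j"
    unfolding sum_statdist_shift old by simp
  finally show "(\<Sum>i<Suc (ntab F). pi_G i * Qmat \<mu> G i j) = pi_G j" .
next
  have "(\<Sum>i<ntab F. pi_G i) = (\<Sum>i<ntab F. (statdist \<mu> F i - (if i = t then phi else 0)) * 1)"
    using pi_G_less by simp
  also have "\<dots> = 1 - phi"
    unfolding sum_statdist_shift using stationary_statdist
    unfolding stationary_iff_invariant_vec by simp
  finally show "(\<Sum>i<Suc (ntab F). pi_G i) = 1"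
    using pi_G_new by simp
next
  fix i assume "Suc (ntab F) \<le> i"
  then show "pi_G i = 0"
    unfolding pi_G_def using stationary_statdist t_less
    unfolding stationary_iff_invariant_vec by simp
qed

lemma redirected_j0_s0: "redirected j0 s0"
  unfolding redirected_def using j0_less t_eq s0_nonempty s0_maximal by simp

lemma reach_new_table: "k < ntab G \<Longrightarrow> \<exists>x. tstar G k x = ntab F"
proof -
  assume "k < ntab G"
  then have k: "k \<le> ntab F"
    unfolding G_simps by simp
  obtain x where "tstar F (origin k) x = j0"
    using j0_Rset origin_less[OF k] unfolding Rset_def by blast
  then have "origin (tstar G k x) = j0"
    using origin_tstar_G[OF k] by simp
  then have "tstar G k (x @ [s0]) = ntab F"
    using redirected_j0_s0 by (simp add: tstar_append G_simps)
  then show ?thesis by blast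
qed

lemma regular_G: "regular \<mu> G" and statdist_G: "statdist \<mu> G = pi_G"
proof -
  have "\<exists>!p. stationary \<mu> G p"
    using stationary_pi_G stationary_unique_if_reachable[OF code_tuple_G reach_new_table]
    by blast
  then show "regular \<mu> G" "statdist \<mu> G = pi_G"
    unfolding regular_def statdist_def using stationary_pi_G by (auto intro: the1_equality)
qed

definition delta :: real where
  "delta = (\<Sum>s\<in>UNIV. if hd (ftab F t s) = a then \<mu> s else 0)"

lemma length_contract:
  "real (length (contract (ftab F t s))) * \<mu> s =
     real (length (ftab F t s)) * \<mu> s - (if hd (ftab F t s) = a then \<mu> s else 0)"
proof (cases "hd (ftab F t s) = a")
  case True
  then obtain w where "ftab F t s = a # (\<not> b) # w"
    by (rule codeword_t_hd_a)
  then show ?thesis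
    by (simp add: contract_a_Cons algebra_simps)
next
  case False
  then show ?thesis
    using contract_not_a codeword_t_nonempty by simp
qed

lemma avglen_G: "avglen \<mu> G = avglen \<mu> F - phi * delta"
proof -
  define l where "l k = (\<Sum>s\<in>UNIV. real (length (ftab F k s)) * \<mu> s)" for k
  have old: "(\<Sum>s\<in>UNIV. real (length (ftab G k s)) * \<mu> s) = l k" if "k < ntab F" for k
    unfolding l_def G_simps using that by simp
  have new: "(\<Sum>s\<in>UNIV. real (length (ftab G (ntab F) s)) * \<mu> s) = l t - delta"
    unfolding G_simps l_def delta_def using length_contract by (simp add: sum_subtractf)
  have "avglen \<mu> G =
      (\<Sum>i<ntab F. (statdist \<mu> F i - (if i = t then phi else 0)) * l i) + phi * (l t - delta)"
    unfolding avglen_def statdist_G G_simps(1) using old new pi_G_less pi_G_new by simp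
  also have "\<dots> = (\<Sum>i<ntab F. statdist \<mu> F i * l i) - phi * delta"
    unfolding sum_statdist_shift by (simp add: algebra_simps)
  also have "(\<Sum>i<ntab F. statdist \<mu> F i * l i) = avglen \<mu> F"
    unfolding avglen_def l_def ..
  finally show ?thesis .
qed

lemma phi_pos: "0 < phi"
proof -
  have "(if redirected j0 s0 then \<mu> s0 else 0) \<le> redirect_mass j0"
    unfolding redirect_mass_def by (rule member_le_sum) (auto intro: less_imp_le mu_pos)
  then have "\<mu> s0 \<le> redirect_mass j0"
    using redirected_j0_s0 by simp
  then have "0 < statdist \<mu> F j0 * redirect_mass j0"
    using statdist_pos[OF j0_Rset] mu_pos[of s0] by simp
  also have "\<dots> \<le> phi"
    unfolding phi_def using j0_less
    by (intro member_le_sum) (auto intro!: mult_nonneg_nonneg statdist_nonneg redirect_mass_nonneg)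
  finally show ?thesis .
qed

lemma delta_pos: "0 < delta"
proof -
  obtain s where s: "hd (ftab F t s) = a"
    using exists_codeword_t_hd_a by blast
  have "(if hd (ftab F t s) = a then \<mu> s else 0) \<le> delta"
    unfolding delta_def by (rule member_le_sum) (auto intro: less_imp_le mu_pos)
  then have "\<mu> s \<le> delta"
    using s by simp
  then show ?thesis
    using mu_pos[of s] by simp
qed

lemma not_optimal: "F \<notin> Fopt \<mu>"
proof
  assume "F \<in> Fopt \<mu>"
  moreover have "G \<in> F0 \<mu>"
    unfolding F0_def using code_tuple_G regular_G ext_code_G two_dec_G by simp
  ultimately have "avglen \<mu> F \<le> avglen \<mu> G"
    unfolding Fopt_def by blast
  moreover have "0 < phi * delta"
    using phi_pos delta_pos by simp
  ultimately show False
    using avglen_G by simp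
qed

end

theorem lemma24:
  fixes \<mu> :: "'a::finite \<Rightarrow> real" and F :: "'a ctuple"
  assumes "card (UNIV :: 'a set) \<ge> 2"
    and "\<And>s. 0 < \<mu> s \<and> \<mu> s \<le> 1"
    and "(\<Sum>s\<in>UNIV. \<mu> s) = 1"
    and "F \<in> Fopt \<mu> \<inter> F2 \<mu>"
  shows "\<exists>i\<in>Rset F. card (Pset F 2 i []) = 4"
proof (rule ccontr)
  assume no_4: "\<not> (\<exists>i\<in>Rset F. card (Pset F 2 i []) = 4)"
  have opt: "F \<in> Fopt \<mu>" and "F \<in> F0 \<mu>" "F \<in> F2 \<mu>"
    using assms(4) unfolding Fopt_def by auto
  then interpret F2_code \<mu> F
    using assms(1-3) unfolding F0_def F2_def by unfold_locales auto
  obtain j0 where j0: "j0 \<in> Rset F"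
    using Rset_nonempty by blast
  then obtain s0 where s0: "ftab F j0 s0 \<noteq> []" "Pbar F 2 j0 (ftab F j0 s0) = {}"
    using longest_codeword unfolding Rset_def by blast
  let ?t = "ttab F j0 s0"
  have "?t \<in> Rset F"
    using Rset_ttab[OF code_tuple_F j0] .
  then have card_t: "card (Pset F 2 ?t []) = 3"
    using no_4 card_Pset2_ge_3[of ?t] card_Pset2_le_4[of F ?t "[]"] unfolding Rset_def by force
  obtain a b where "[a, b] \<notin> Pset F 2 ?t []"
    using Pset2_missing[of F ?t "[]"] card_t by auto
  then interpret contraction \<mu> F j0 s0 ?t a b
    using j0 s0 card_t by unfold_locales auto
  show False
    using not_optimal opt by contradiction
qed

end
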